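(* For every $i\in X\setminus\{r+1,n-r\}$ the relations $F_X^+E_i-E_iF_X^+=0$ and $F_X^+F_i-F_iF_X^+=0$ hold in $U_q(\mathfrak g)$.
   Context: Let $\mathbb K$ be a field of characteristic zero and $q$ an indeterminate. $n\ge1$, $I=\{1,\dots,n\}$, $\mathfrak g=\mathfrak{sl}_{n+1}(\mathbb C)$ with simple roots $\alpha_i$, fundamental weights $\varpi_i$, weight lattice $P$, Cartan matrix $a_{ii}=2$, $a_{ij}=-1$ if $|i-j|=1$, $a_{ij}=0$ otherwise, form $(\alpha_i,\alpha_j)=a_{ij}$, $(\alpha_i,\varpi_j)=\delta_{ij}$. $U_q(\mathfrak g)$ is the $\mathbb K(q^{1/2})$-algebra generated by $E_i,F_i$ ($i\in I$), $K_\mu$ ($\mu\in P$) with $K_0=1$, $K_\mu K_\lambda=K_{\mu+\lambda}$, $K_\mu E_i=q^{(\alpha_i,\mu)}E_iK_\mu$, $K_\mu F_i=q^{-(\alpha_i,\mu)}F_iK_\mu$, $E_iF_j-F_jE_i=\delta_{ij}\frac{K_i-K_i^{-1}}{q-q^{-1}}$ ($K_i=K_{\alpha_i}$), and quantum Serre relations $E_iE_j=E_jE_i$, $F_iF_j=F_jF_i$ if $a_{ij}=0$, $p(E_i,E_j)=p(F_i,F_j)=0$ if $a_{ij}=-1$, with $p(x,y)=x^2y-(q+q^{-1})xyx+yx^2$. Write $[a,b]_c=ab-cba$. Fix $r$ with $1\le r\le\lceil n/2\rceil-1$ and $X=\{r+1,\dots,n-r\}$. Put $F_X^+=[F_{r+1},[F_{r+2},\dots,[F_{n-r-1},F_{n-r}]_q\dots]_q]_q$.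 *)

theory Defs
  imports "HOL-Computational_Algebra.Polynomial" "HOL-Computational_Algebra.Fraction_Field"
begin

(* The base field K(q^{1/2}): rational functions over K in an indeterminate t = q^{1/2}. *)
type_synonym 'k qfield = "'k poly fract"

definition qhalf :: "('k::field_char_0) qfield" where
  "qhalf = Fract [:0, 1:] 1"

definition qq :: "('k::field_char_0) qfield" where
  "qq = qhalf ^ 2"

(* Cartan matrix of sl_{n+1}, indices in I = {1..n} *)
definition cartan :: "nat \<Rightarrow> nat \<Rightarrow> int" where
  "cartan i j = (if i = j then 2 else if i = j + 1 \<or> j = i + 1 then -1 else 0)"

(* Weight lattice P: a weight mu = sum_j mu j * varpi_j, coordinates in the fundamental weight basis *)
definition wlat :: "nat \<Rightarrow> (nat \<Rightarrow> int) set" where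
  "wlat n = {mu. \<forall>j. j \<notin> {1..n} \<longrightarrow> mu j = 0}"

(* simple root alpha_i = sum_j a_{ji} varpi_j *)
definition sroot :: "nat \<Rightarrow> nat \<Rightarrow> (nat \<Rightarrow> int)" where
  "sroot n i = (\<lambda>j. if j \<in> {1..n} then cartan j i else 0)"

(* (alpha_i, mu) for mu in P; since (alpha_i, varpi_j) = delta_ij this is the i-th coordinate *)
definition rootpair :: "nat \<Rightarrow> (nat \<Rightarrow> int) \<Rightarrow> int" where
  "rootpair i mu = mu i"

(* phi: structure map of a K(q^{1/2})-algebra, i.e. unital ring hom into the centre *)
definition scalar_map :: "('k::field_char_0 qfield \<Rightarrow> 'a::ring_1) \<Rightarrow> bool" where
  "scalar_map phi \<longleftrightarrow> phi 1 = 1 \<and> (\<forall>x y. phi (x + y) = phi x + phi y)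
     \<and> (\<forall>x y. phi (x * y) = phi x * phi y) \<and> (\<forall>c z. phi c * z = z * phi c)"

definition qbr :: "('k::field_char_0 qfield \<Rightarrow> 'a::ring_1) \<Rightarrow> 'k qfield \<Rightarrow> 'a \<Rightarrow> 'a \<Rightarrow> 'a" where
  "qbr phi c a b = a * b - phi c * b * a"

definition serre :: "('k::field_char_0 qfield \<Rightarrow> 'a::ring_1) \<Rightarrow> 'a \<Rightarrow> 'a \<Rightarrow> 'a" where
  "serre phi x y = x * x * y - phi (qq + inverse qq) * x * y * x + y * x * x"

definition uq_rels :: "nat \<Rightarrow> ('k::field_char_0 qfield \<Rightarrow> 'a::ring_1) \<Rightarrow> (nat \<Rightarrow> 'a) \<Rightarrow> (nat \<Rightarrow> 'a)
    \<Rightarrow> ((nat \<Rightarrow> int) \<Rightarrow> 'a) \<Rightarrow> bool" where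
  "uq_rels n phi E F K \<longleftrightarrow>
     scalar_map phi
   \<and> K (\<lambda>_. 0) = 1
   \<and> (\<forall>mu \<in> wlat n. \<forall>la \<in> wlat n. K mu * K la = K (\<lambda>j. mu j + la j))
   \<and> (\<forall>mu \<in> wlat n. \<forall>i \<in> {1..n}. K mu * E i = phi (qq powi rootpair i mu) * E i * K mu)
   \<and> (\<forall>mu \<in> wlat n. \<forall>i \<in> {1..n}. K mu * F i = phi (qq powi (- rootpair i mu)) * F i * K mu)
   \<and> (\<forall>i \<in> {1..n}. \<forall>j \<in> {1..n}. E i * F j - F j * E i =
        (if i = j then (K (sroot n i) - K (\<lambda>k. - sroot n i k)) * phi (inverse (qq - inverse qq)) else 0))
   \<and> (\<forall>i \<in> {1..n}. \<forall>j \<in> {1..n}. cartan i j = 0 \<longrightarrow> E i * E j = E j * E i \<and> F i * F j = F j * F i)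
   \<and> (\<forall>i \<in> {1..n}. \<forall>j \<in> {1..n}. cartan i j = -1 \<longrightarrow> serre phi (E i) (E j) = 0 \<and> serre phi (F i) (F j) = 0)"

definition FXplus :: "('k::field_char_0 qfield \<Rightarrow> 'a::ring_1) \<Rightarrow> (nat \<Rightarrow> 'a) \<Rightarrow> nat \<Rightarrow> nat \<Rightarrow> 'a" where
  "FXplus phi F n r = foldr (\<lambda>j acc. qbr phi qq (F j) acc) [r+1..<n-r] (F (n - r))"

end

theory Submission
  imports Defs "HOL-Computational_Algebra.Polynomial_Factorial"
begin

text \<open>Write F_X^+ = [F_{r+1},[...,[F_{i-1},[F_i,Z]_q]_q...]_q]_q with
  Z = [F_{i+1},[...,F_{n-r}]_q]_q. As i is interior, E_i and F_i commute with F_{r+1},...,F_{i-2},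
  so it suffices that they commute with W = [F_{i-1},[F_i,Z]_q]_q.

  The commutator with E_i is a derivation of q-brackets, and only
  [E_i,F_i] = (K_i - K_i^{-1})/(q - q^{-1}) contributes. Since K_i^{\<plusminus>1} Z = q^{\<plusminus>1} Z K_i^{\<plusminus>1},
  this gives [E_i,[F_i,Z]_q] = Z K_i^{-1}, whose q-bracket with F_{i-1} vanishes because
  K_i^{-1} F_{i-1} = q^{-1} F_{i-1} K_i^{-1}.

  For F_i, write Z = [F_{i+1},Z']_q with Z' commuting with F_{i-1} and F_i; then
  W = [[F_{i-1},[F_i,F_{i+1}]_q]_q,Z']_q, and F_i commutes with the inner bracket by the two Serre
  relations for F_i, as q^2 + 1 is invertible.\<close>

lemma qq_eq_to_fract: "(qq :: 'k::field_char_0 qfield) = to_fract (monom 1 2)"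
  by (simp add: qq_def qhalf_def to_fract_def power2_eq_square monom_altdef)

lemma qq_square_eq_to_fract: "(qq * qq :: 'k::field_char_0 qfield) = to_fract (monom 1 4)"
  by (simp add: qq_eq_to_fract mult_monom flip: to_fract_mult)

lemma qq_nonzero: "(qq :: 'k::field_char_0 qfield) \<noteq> 0"
  by (simp add: qq_eq_to_fract)

lemma qq_square_neq_one: "(qq * qq :: 'k::field_char_0 qfield) \<noteq> 1"
proof -
  have "monom (1::'k) 4 \<noteq> 1" by (simp add: monom_eq_1_iff)
  then show ?thesis unfolding qq_square_eq_to_fract by (metis to_fract_1 to_fract_eq_iff)
qed

lemma qq_square_plus_one_nonzero: "(qq * qq + 1 :: 'k::field_char_0 qfield) \<noteq> 0"
proof -
  have "poly (monom (1::'k) 4 + 1) 0 \<noteq> 0" by (simp add: poly_monom)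
  then have "monom (1::'k) 4 + 1 \<noteq> 0" by (metis poly_0)
  then show ?thesis unfolding qq_square_eq_to_fract by (metis to_fract_1 to_fract_add to_fract_eq_0_iff)
qed

lemma qq_minus_inverse_nonzero: "(qq - inverse qq :: 'k::field_char_0 qfield) \<noteq> 0"
proof
  assume "qq - inverse qq = (0 :: 'k qfield)"
  then have "qq * qq = qq * (inverse qq :: 'k qfield)" by simp
  then show False using qq_nonzero[where 'k='k] qq_square_neq_one[where 'k='k] by simp
qed

text \<open>For V = [x,[y,z]_q]_q, the element (q^2 + 1)(y V - V y) is a combination of q p(y,x) and
  q p(y,z), where p is the Serre polynomial.\<close>
lemma q_serre_identity:
  fixes Q x y z :: "'a::ring_1"
  assumes Q_central: "\<And>w. Q * w = w * Q" and xz: "x * z = z * x"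
  shows "(Q * Q + 1) * (y * (x * (y * z - Q * z * y) - Q * (y * z - Q * z * y) * x)
             - (x * (y * z - Q * z * y) - Q * (y * z - Q * z * y) * x) * y)
       = Q * Q * z * (Q * (y * y * x) - (Q * Q + 1) * (y * x * y) + Q * (x * y * y))
         - (Q * (y * y * x) - (Q * Q + 1) * (y * x * y) + Q * (x * y * y)) * z
         + x * (Q * (y * y * z) - (Q * Q + 1) * (y * z * y) + Q * (z * y * y))
         - Q * Q * (Q * (y * y * z) - (Q * Q + 1) * (y * z * y) + Q * (z * y * y)) * x"
proof -
  have Q_left_commute: "a * (Q * b) = Q * (a * b)" for a b by (metis Q_central mult.assoc)
  have Q_right: "a * Q = Q * a" for a by (metis Q_central)
  have zx: "z * (x * b) = x * (z * b)" for b by (metis xz mult.assoc)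
  show ?thesis
    by (simp add: algebra_simps Q_left_commute[of x] Q_left_commute[of y] Q_left_commute[of z]
        Q_right[of x] Q_right[of y] Q_right[of z] zx xz)
qed

definition qchain :: "('k::field_char_0 qfield \<Rightarrow> 'a::ring_1) \<Rightarrow> 'k qfield \<Rightarrow> (nat \<Rightarrow> 'a)
    \<Rightarrow> nat \<Rightarrow> nat \<Rightarrow> 'a" where
  "qchain phi c F a b = foldr (\<lambda>j acc. qbr phi c (F j) acc) [a..<b] (F b)"

lemma FXplus_eq_qchain: "FXplus phi F n r = qchain phi qq F (r + 1) (n - r)"
  by (simp add: FXplus_def qchain_def)

lemma qchain_same [simp]: "qchain phi c F b b = F b"
  by (simp add: qchain_def)

lemma qchain_Cons: "a < b \<Longrightarrow> qchain phi c F a b = qbr phi c (F a) (qchain phi c F (Suc a) b)"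
  by (simp add: qchain_def upt_conv_Cons)

locale scalar_algebra =
  fixes phi :: "'k::field_char_0 qfield \<Rightarrow> 'a::ring_1"
  assumes scalar_map: "scalar_map phi"
begin

lemma hom_add: "phi (x + y) = phi x + phi y"
  and hom_mult: "phi (x * y) = phi x * phi y"
  and hom_one: "phi 1 = 1"
  and central: "phi c * z = z * phi c"
  using scalar_map unfolding scalar_map_def by blast+

lemma hom_zero: "phi 0 = 0"
  using hom_add[of 0 0] by simp

lemma hom_uminus: "phi (- x) = - phi x"
  using hom_add[of x "- x"] by (simp add: hom_zero minus_unique)

lemma hom_diff: "phi (x - y) = phi x - phi y"
  using hom_add[of x "- y"] by (simp add: hom_uminus)

lemma hom_inverse_cancel: "c \<noteq> 0 \<Longrightarrow> phi c * phi (inverse c) = 1"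
  by (simp flip: hom_mult add: hom_one)

lemma hom_mult_eq_0_cancel:
  assumes "c \<noteq> 0" and "phi c * x = 0"
  shows "x = 0"
proof -
  have "x = phi (inverse c * c) * x" by (simp add: assms(1) hom_one)
  then show ?thesis by (simp add: assms(2) hom_mult mult.assoc)
qed

lemma qbr_zero_left [simp]: "qbr phi c 0 B = 0"
  and qbr_zero_right [simp]: "qbr phi c A 0 = 0"
  by (simp_all add: qbr_def)

lemma qbr_diff_left: "qbr phi c (A - B) Z = qbr phi c A Z - qbr phi c B Z"
  by (simp add: qbr_def algebra_simps)

lemma qbr_mult_scalar_left: "qbr phi c (A * phi s) Z = qbr phi c A Z * phi s"
proof -
  have "A * phi s * Z = A * Z * phi s" by (simp add: mult.assoc central[of s Z])
  then show ?thesis by (simp add: qbr_def left_diff_distrib mult.assoc)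
qed

lemma qbr_one: "qbr phi 1 A B = A * B - B * A"
  by (simp add: qbr_def hom_one)

lemma central_left_commute: "z * (phi c * w) = phi c * (z * w)"
  by (metis central mult.assoc)

lemma commutator_qbr:
  "X * qbr phi c A B - qbr phi c A B * X = qbr phi c (X * A - A * X) B + qbr phi c A (X * B - B * X)"
  unfolding qbr_def by (simp add: algebra_simps central_left_commute[of X])

lemma qbr_commute:
  assumes "X * A = A * X" and "X * B = B * X"
  shows "X * qbr phi c A B = qbr phi c A B * X"
  using commutator_qbr[of X c A B] assms by simp

lemma eigen_mult:
  assumes "K * A = phi s * A * K" and "K * B = phi t * B * K"
  shows "K * (A * B) = phi (s * t) * (A * B) * K"
proof -
  have "K * (A * B) = phi s * (A * (K * B))" by (simp add: assms(1) mult.assoc flip: mult.assoc[of K])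
  also have "\<dots> = phi s * phi t * (A * B) * K"
    by (simp add: assms(2) mult.assoc central_left_commute[of A])
  finally show ?thesis by (simp add: hom_mult)
qed

lemma qbr_eigen:
  assumes "K * A = phi s * A * K" and "K * B = phi t * B * K"
  shows "K * qbr phi c A B = phi (s * t) * qbr phi c A B * K"
proof -
  have "K * (phi c * B) = phi t * (phi c * B) * K"
    by (simp add: assms(2) central_left_commute[of K] central_left_commute[of "phi t"] mult.assoc)
  from eigen_mult[OF this assms(1)] eigen_mult[OF assms]
  show ?thesis by (simp add: qbr_def right_diff_distrib left_diff_distrib mult.commute[of t s] mult.assoc)
qed

lemma qbr_eigen_left:
  assumes "K * Z = phi d * Z * K"
  shows "qbr phi c K Z = phi (d - c) * Z * K"
  by (simp add: qbr_def assms hom_diff left_diff_distrib)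

lemma qbr_mult_eigen_right:
  assumes "K * A = phi e * A * K"
  shows "qbr phi c A (Z * K) = qbr phi (c * e) A Z * K"
proof -
  have "Z * K * A = phi e * (Z * A * K)"
    by (simp add: mult.assoc assms central_left_commute[of Z] flip: mult.assoc[of K])
  then show ?thesis by (simp add: qbr_def hom_mult left_diff_distrib mult.assoc)
qed

lemma qbr_reassoc:
  assumes "x * w = w * x" and "y * w = w * y"
  shows "qbr phi c x (qbr phi c y (qbr phi c z w)) = qbr phi c (qbr phi c x (qbr phi c y z)) w"
proof -
  have "w * (x * v) = x * (w * v)" "w * (y * v) = y * (w * v)" for v
    by (metis assms mult.assoc)+
  with assms show ?thesis
    unfolding qbr_def
    by (simp add: algebra_simps central_left_commute[of x] central_left_commute[of y]
        central_left_commute[of z] central_left_commute[of w])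
qed

lemma serre_commute:
  assumes yx: "serre phi y x = 0" and yz: "serre phi y z = 0" and xz: "x * z = z * x"
  shows "y * qbr phi qq x (qbr phi qq y z) = qbr phi qq x (qbr phi qq y z) * y"
proof -
  define Q where "Q = phi qq"
  have Q_central: "Q * w = w * Q" for w unfolding Q_def by (rule central)
  have "qq * (qq + inverse qq) = qq * qq + (1 :: 'k qfield)"
    using qq_nonzero[where 'k='k] by (simp add: distrib_left)
  then have Q_sum: "Q * phi (qq + inverse qq) = Q * Q + 1"
    unfolding Q_def by (metis hom_add hom_mult hom_one)
  have Q_serre: "Q * (y * y * u) - (Q * Q + 1) * (y * u * y) + Q * (u * y * y) = Q * serre phi y u" for u
  proof -
    have "Q * serre phi y u = Q * (y * y * u) - (Q * phi (qq + inverse qq)) * (y * u * y) + Q * (u * y * y)"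
      unfolding serre_def by (simp add: algebra_simps)
    then show ?thesis unfolding Q_sum by simp
  qed
  let ?V = "x * (y * z - Q * z * y) - Q * (y * z - Q * z * y) * x"
  have "(Q * Q + 1) * (y * ?V - ?V * y) = 0"
    using q_serre_identity[OF Q_central xz, of y] unfolding Q_serre yx yz by simp
  moreover have "Q * Q + 1 = phi (qq * qq + 1)"
    by (simp add: Q_def hom_add hom_mult hom_one)
  ultimately have "y * ?V - ?V * y = 0"
    using hom_mult_eq_0_cancel[OF qq_square_plus_one_nonzero] by metis
  then show ?thesis by (simp add: qbr_def Q_def)
qed

lemma qchain_commute_extend:
  assumes "a \<le> m" and "m \<le> b"
    and "X * qchain phi c F m b = qchain phi c F m b * X"
    and "\<And>j. a \<le> j \<Longrightarrow> j < m \<Longrightarrow> X * F j = F j * X"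
  shows "X * qchain phi c F a b = qchain phi c F a b * X"
  using assms(1,4)
proof (induction a rule: inc_induct)
  case base
  show ?case by (rule assms(3))
next
  case (step a)
  then show ?case using assms(2) by (simp add: qchain_Cons qbr_commute)
qed

lemma qchain_commute:
  assumes "a \<le> b" and "\<And>j. a \<le> j \<Longrightarrow> j \<le> b \<Longrightarrow> X * F j = F j * X"
  shows "X * qchain phi c F a b = qchain phi c F a b * X"
  using qchain_commute_extend[of a b b X c F] assms by simp

lemma qchain_eigen:
  assumes "a \<le> b" and "\<And>j. a \<le> j \<Longrightarrow> j \<le> b \<Longrightarrow> K * F j = phi (w j) * F j * K"
  shows "K * qchain phi c F a b = phi (\<Prod>j = a..b. w j) * qchain phi c F a b * K"
  using assms
proof (induction a rule: inc_induct)
  case base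
  then show ?case by simp
next
  case (step a)
  then show ?case by (simp add: qchain_Cons qbr_eigen prod.atLeast_Suc_atMost)
qed

end

lemma prod_cartan_above:
  fixes g :: "int \<Rightarrow> 'b::comm_monoid_mult"
  assumes "i < b" and "g 0 = 1"
  shows "(\<Prod>j = Suc i..b. g (cartan j i)) = g (- 1)"
proof -
  have "(\<Prod>j = Suc (Suc i)..b. g (cartan j i)) = 1"
    by (rule prod.neutral) (simp add: cartan_def assms(2))
  with assms(1) show ?thesis by (simp add: prod.atLeast_Suc_atMost cartan_def)
qed

locale uq_algebra =
  fixes n :: nat and phi :: "'k::field_char_0 qfield \<Rightarrow> 'a::ring_1"
    and E F :: "nat \<Rightarrow> 'a" and K :: "(nat \<Rightarrow> int) \<Rightarrow> 'a"
  assumes uq_rels: "uq_rels n phi E F K"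
begin

sublocale scalar_algebra phi
  by (rule scalar_algebra.intro) (use uq_rels uq_rels_def in blast)

lemma F_commute:
  assumes "j \<in> {1..n}" and "k \<in> {1..n}" and "Suc j < k \<or> Suc k < j"
  shows "F j * F k = F k * F j"
proof -
  have "cartan j k = 0" using assms(3) by (auto simp: cartan_def)
  then show ?thesis using uq_rels assms(1,2) unfolding uq_rels_def by blast
qed

lemma E_F_commute:
  assumes "i \<in> {1..n}" and "j \<in> {1..n}" and "i \<noteq> j"
  shows "E i * F j = F j * E i"
proof -
  have "E i * F j - F j * E i = 0" using uq_rels assms unfolding uq_rels_def by auto
  then show ?thesis by simp
qed

lemma E_F_commutator:
  assumes "i \<in> {1..n}"
  shows "E i * F i - F i * E i
       = (K (sroot n i) - K (\<lambda>k. - sroot n i k)) * phi (inverse (qq - inverse qq))"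
  using uq_rels assms unfolding uq_rels_def by auto

lemma K_root_F:
  assumes "i \<in> {1..n}" and "j \<in> {1..n}"
  shows "K (sroot n i) * F j = phi (qq powi (- cartan j i)) * F j * K (sroot n i)"
    and "K (\<lambda>k. - sroot n i k) * F j = phi (qq powi cartan j i) * F j * K (\<lambda>k. - sroot n i k)"
proof -
  have "sroot n i \<in> wlat n" and "(\<lambda>k. - sroot n i k) \<in> wlat n"
    by (auto simp: wlat_def sroot_def)
  then show "K (sroot n i) * F j = phi (qq powi (- cartan j i)) * F j * K (sroot n i)"
    and "K (\<lambda>k. - sroot n i k) * F j = phi (qq powi cartan j i) * F j * K (\<lambda>k. - sroot n i k)"
    using uq_rels assms(2) unfolding uq_rels_def by (auto simp: rootpair_def sroot_def)
qed

lemma serre_F: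
  assumes "i \<in> {1..n}" and "j \<in> {1..n}" and "Suc i = j \<or> Suc j = i"
  shows "serre phi (F i) (F j) = 0"
proof -
  have "cartan i j = -1" using assms(3) by (auto simp: cartan_def)
  then show ?thesis using uq_rels assms(1,2) unfolding uq_rels_def by blast
qed

lemma K_root_qchain:
  assumes "1 \<le> i" and "i < b" and "b \<le> n"
  shows "K (sroot n i) * qchain phi qq F (Suc i) b = phi qq * qchain phi qq F (Suc i) b * K (sroot n i)"
    and "K (\<lambda>k. - sroot n i k) * qchain phi qq F (Suc i) b
       = phi (inverse qq) * qchain phi qq F (Suc i) b * K (\<lambda>k. - sroot n i k)"
proof -
  have i: "i \<in> {1..n}" using assms by auto
  have "K (sroot n i) * qchain phi qq F (Suc i) b
      = phi (\<Prod>j = Suc i..b. qq powi (- cartan j i)) * qchain phi qq F (Suc i) b * K (sroot n i)"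
    by (rule qchain_eigen) (use assms K_root_F(1)[OF i] in auto)
  moreover have "(\<Prod>j = Suc i..b. qq powi (- cartan j i)) = (qq :: 'k qfield)"
    using prod_cartan_above[of i b "\<lambda>k. (qq :: 'k qfield) powi (- k)"] assms by simp
  ultimately show "K (sroot n i) * qchain phi qq F (Suc i) b
      = phi qq * qchain phi qq F (Suc i) b * K (sroot n i)" by simp
  have "K (\<lambda>k. - sroot n i k) * qchain phi qq F (Suc i) b
      = phi (\<Prod>j = Suc i..b. qq powi cartan j i) * qchain phi qq F (Suc i) b * K (\<lambda>k. - sroot n i k)"
    by (rule qchain_eigen) (use assms K_root_F(2)[OF i] in auto)
  moreover have "(\<Prod>j = Suc i..b. qq powi cartan j i) = inverse (qq :: 'k qfield)"
    using prod_cartan_above[of i b "\<lambda>k. (qq :: 'k qfield) powi k"] assms by simp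
  ultimately show "K (\<lambda>k. - sroot n i k) * qchain phi qq F (Suc i) b
      = phi (inverse qq) * qchain phi qq F (Suc i) b * K (\<lambda>k. - sroot n i k)" by simp
qed

lemma E_commutator_qbr_qchain:
  assumes "1 \<le> i" and "i < b" and "b \<le> n"
  shows "E i * qbr phi qq (F i) (qchain phi qq F (Suc i) b)
         - qbr phi qq (F i) (qchain phi qq F (Suc i) b) * E i
       = qchain phi qq F (Suc i) b * K (\<lambda>k. - sroot n i k)"
proof -
  define Z where "Z = qchain phi qq F (Suc i) b"
  define Kp where "Kp = K (sroot n i)"
  define Km where "Km = K (\<lambda>k. - sroot n i k)"
  define \<kappa> where "\<kappa> = phi (inverse (qq - inverse qq))"
  have i: "i \<in> {1..n}" using assms by auto
  have E_Z: "E i * Z = Z * E i"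
    unfolding Z_def by (rule qchain_commute) (use assms in \<open>auto intro!: E_F_commute\<close>)
  have Kp_Z: "Kp * Z = phi qq * Z * Kp" and Km_Z: "Km * Z = phi (inverse qq) * Z * Km"
    using K_root_qchain[of i b] assms unfolding Z_def Kp_def Km_def by auto
  have \<kappa>_central: "Z * (Km * \<kappa>) = \<kappa> * (Z * Km)"
    unfolding \<kappa>_def by (simp add: central mult.assoc)
  have "E i * qbr phi qq (F i) Z - qbr phi qq (F i) Z * E i = qbr phi qq ((Kp - Km) * \<kappa>) Z"
    using commutator_qbr[of "E i" qq "F i" Z] E_F_commutator[OF i] E_Z
    by (simp add: Kp_def Km_def \<kappa>_def)
  also have "\<dots> = (qbr phi qq Kp Z - qbr phi qq Km Z) * \<kappa>"
    by (simp add: \<kappa>_def qbr_diff_left qbr_mult_scalar_left left_diff_distrib)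
  also have "\<dots> = phi (qq - inverse qq) * \<kappa> * (Z * Km)"
    by (simp add: qbr_eigen_left[OF Kp_Z] qbr_eigen_left[OF Km_Z] hom_zero hom_diff algebra_simps
        \<kappa>_central)
  also have "\<dots> = Z * Km"
    using hom_inverse_cancel[OF qq_minus_inverse_nonzero] by (simp add: \<kappa>_def)
  finally show ?thesis unfolding Z_def Km_def .
qed

lemma E_Suc_commute_qchain:
  assumes "1 \<le> m" and "Suc m < b" and "b \<le> n"
  shows "E (Suc m) * qchain phi qq F m b = qchain phi qq F m b * E (Suc m)"
proof -
  define i where "i = Suc m"
  define Z where "Z = qchain phi qq F (Suc i) b"
  define Km where "Km = K (\<lambda>k. - sroot n i k)"
  have i: "i \<in> {1..n}" using assms by (auto simp: i_def)
  have F_Z: "F m * Z = Z * F m"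
    unfolding Z_def by (rule qchain_commute) (use assms in \<open>auto simp: i_def intro!: F_commute\<close>)
  have Km_F: "Km * F m = phi (inverse qq) * F m * Km"
    using K_root_F(2)[OF i, of m] assms by (simp add: Km_def i_def cartan_def)
  have "E i * qchain phi qq F m b - qchain phi qq F m b * E i = qbr phi qq (F m) (Z * Km)"
    using commutator_qbr[of "E i" qq "F m" "qbr phi qq (F i) Z"] E_F_commute[OF i, of m]
      E_commutator_qbr_qchain[of i b] assms
    by (simp add: qchain_Cons Z_def Km_def i_def)
  also have "\<dots> = qbr phi (qq * inverse qq) (F m) Z * Km"
    by (rule qbr_mult_eigen_right[OF Km_F])
  also have "\<dots> = 0"
    using qq_nonzero[where 'k='k] F_Z by (simp add: qbr_one)
  finally show ?thesis by (simp add: i_def)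
qed

lemma F_Suc_commute_qchain:
  assumes "1 \<le> m" and "Suc m < b" and "b \<le> n"
  shows "F (Suc m) * qchain phi qq F m b = qchain phi qq F m b * F (Suc m)"
proof -
  define V where "V = qbr phi qq (F m) (qbr phi qq (F (Suc m)) (F (Suc (Suc m))))"
  have V: "F (Suc m) * V = V * F (Suc m)"
    unfolding V_def by (rule serre_commute) (use assms in \<open>auto intro: serre_F F_commute\<close>)
  show ?thesis
  proof (cases "b = Suc (Suc m)")
    case True
    then show ?thesis using V by (simp add: V_def qchain_Cons)
  next
    case False
    define w where "w = qchain phi qq F (Suc (Suc (Suc m))) b"
    have w: "F m * w = w * F m" "F (Suc m) * w = w * F (Suc m)"
      unfolding w_def using assms False by (auto intro!: qchain_commute F_commute)
    have "qchain phi qq F m b = qbr phi qq (F m) (qbr phi qq (F (Suc m)) (qbr phi qq (F (Suc (Suc m))) w))"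
      using assms False by (simp add: qchain_Cons w_def)
    also have "\<dots> = qbr phi qq V w"
      unfolding V_def by (rule qbr_reassoc[OF w])
    finally show ?thesis using V w(2) by (simp add: qbr_commute)
  qed
qed

lemma E_commute_qchain:
  assumes "1 \<le> a" and "a < i" and "i < b" and "b \<le> n"
  shows "E i * qchain phi qq F a b = qchain phi qq F a b * E i"
proof (rule qchain_commute_extend[of a "i - 1"])
  show "a \<le> i - 1" and "i - 1 \<le> b" using assms by auto
  show "E i * qchain phi qq F (i - 1) b = qchain phi qq F (i - 1) b * E i"
    using E_Suc_commute_qchain[of "i - 1" b] assms by simp
  show "E i * F j = F j * E i" if "a \<le> j" and "j < i - 1" for j
    using assms that by (auto intro!: E_F_commute)
qed

lemma F_commute_qchain:
  assumes "1 \<le> a" and "a < i" and "i < b" and "b \<le> n"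
  shows "F i * qchain phi qq F a b = qchain phi qq F a b * F i"
proof (rule qchain_commute_extend[of a "i - 1"])
  show "a \<le> i - 1" and "i - 1 \<le> b" using assms by auto
  show "F i * qchain phi qq F (i - 1) b = qchain phi qq F (i - 1) b * F i"
    using F_Suc_commute_qchain[of "i - 1" b] assms by simp
  show "F i * F j = F j * F i" if "a \<le> j" and "j < i - 1" for j
    using assms that by (auto intro!: F_commute)
qed

end

theorem lemma4p1:
  fixes n r :: nat
    and phi :: "('k::field_char_0) qfield \<Rightarrow> 'a::ring_1"
    and E F :: "nat \<Rightarrow> 'a" and K :: "(nat \<Rightarrow> int) \<Rightarrow> 'a"
  assumes "1 \<le> n"
    and "1 \<le> r" and "r \<le> (n + 1) div 2 - 1"
    and "uq_rels n phi E F K"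
    and "i \<in> {r+1..n-r} - {r+1, n-r}"
  shows "FXplus phi F n r * E i - E i * FXplus phi F n r = 0
       \<and> FXplus phi F n r * F i - F i * FXplus phi F n r = 0"
proof -
  interpret uq_algebra n phi E F K by (rule uq_algebra.intro) (fact assms(4))
  have "1 \<le> r + 1" and "r + 1 < i" and "i < n - r" and "n - r \<le> n"
    using assms(5) by auto
  then show ?thesis
    unfolding FXplus_eq_qchain using E_commute_qchain F_commute_qchain by simp
qed

end
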